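(* Let $0<m<1$, $\mu>0$, $f$ smooth, $u_->u_+=0$, $s=\frac{f(u_+)-f(u_-)}{u_+-u_-}$ with $f'(u_+)=s<f'(u_-)$, and $f''(u_+)=\cdots=f^{(k_+)}(u_+)=0$, $f^{(k_++1)}(u_+)\ne0$ for some integer $k_+\ge1$. Let $U$ be a monotonically decreasing viscous shock profile, i.e. $-sU'+f(U)'=\mu(U^m)''$ with $U(-\infty)=u_-$, $U(+\infty)=u_+$. Then there is a constant $C>0$ such that for all $\xi\in\mathbb{R}$, $$|U_\xi(\xi)|\le CU(\xi)^{k_++2-m},\qquad |U_{\xi\xi}(\xi)|\le CU(\xi)^{2k_++3-2m}.$$ *)

theory Defs
  imports "HOL-Analysis.Analysis"
begin

definition smooth_fun :: "(real \<Rightarrow> real) \<Rightarrow> bool" where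
  "smooth_fun f \<longleftrightarrow> (\<forall>n x. ((deriv ^^ n) f) differentiable (at x))"

end

theory Submission
  imports Defs
begin

(*
  Integrating the profile equation once from +infinity, where U and U^m vanish, gives
  mu (U^m)' = h(U) with h(u) = f(u) - f(0) - s u.  The degeneracy of f at u_+ = 0 yields,
  by Taylor's theorem, |h(u)| <= M u^(k+1) and |h'(u)| <= M u^k.  Where U > 0 the equation reads
  U' = phi(U) with phi(u) = u^(1-m) h(u) / (mu m), hence U'' = phi'(U) U', and both bounds follow.
  Where U = 0, U is at its minimum and U' <= 0 at its maximum, so U' and U'' vanish there.
*)

lemma smooth_fun_has_real_derivative:
  assumes "smooth_fun f"
  shows "((deriv ^^ n) f has_real_derivative (deriv ^^ Suc n) f x) (at x)"
  using assms unfolding smooth_fun_def by (simp add: DERIV_deriv_iff_real_differentiable)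

lemma smooth_fun_deriv:
  assumes "smooth_fun f"
  shows "smooth_fun (deriv f)"
  using assms unfolding smooth_fun_def by (metis comp_apply funpow_Suc_right)

lemma smooth_fun_taylor_remainder_bound:
  assumes g: "smooth_fun g" and "p \<le> n"
    and flat: "\<And>j. p \<le> j \<Longrightarrow> j < n \<Longrightarrow> (deriv ^^ j) g 0 = 0"
  shows "\<exists>M>0. \<forall>u. \<bar>u\<bar> \<le> b \<longrightarrow>
           \<bar>g u - (\<Sum>j<p. (deriv ^^ j) g 0 / fact j * u ^ j)\<bar> \<le> M * \<bar>u\<bar> ^ n"
proof -
  have "continuous_on (cball 0 b) ((deriv ^^ n) g)"
    using smooth_fun_has_real_derivative[OF g]
    by (meson DERIV_isCont continuous_at_imp_continuous_on)
  then have "bounded ((deriv ^^ n) g ` cball 0 b)"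
    by (intro compact_imp_bounded compact_continuous_image) auto
  then obtain B where "B > 0" and B: "\<And>t. \<bar>t\<bar> \<le> b \<Longrightarrow> \<bar>(deriv ^^ n) g t\<bar> \<le> B"
    unfolding bounded_pos by auto
  have "\<bar>g u - (\<Sum>j<p. (deriv ^^ j) g 0 / fact j * u ^ j)\<bar> \<le> B / fact n * \<bar>u\<bar> ^ n"
    if u: "\<bar>u\<bar> \<le> b" for u
  proof -
    obtain t where t: "\<bar>t\<bar> \<le> \<bar>u\<bar>" and taylor:
      "g u = (\<Sum>j<n. (deriv ^^ j) g 0 / fact j * u ^ j) + (deriv ^^ n) g t / fact n * u ^ n"
      using Maclaurin_all_le[of "\<lambda>j. (deriv ^^ j) g" g u n] smooth_fun_has_real_derivative[OF g]
      by auto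
    have "(\<Sum>j<n. (deriv ^^ j) g 0 / fact j * u ^ j) = (\<Sum>j<p. (deriv ^^ j) g 0 / fact j * u ^ j)"
      using flat \<open>p \<le> n\<close> by (intro sum.mono_neutral_right) auto
    then have "\<bar>g u - (\<Sum>j<p. (deriv ^^ j) g 0 / fact j * u ^ j)\<bar>
        = \<bar>(deriv ^^ n) g t\<bar> / fact n * \<bar>u\<bar> ^ n"
      by (simp add: taylor abs_mult power_abs)
    also have "\<dots> \<le> B / fact n * \<bar>u\<bar> ^ n"
      using B t u by (intro mult_right_mono divide_right_mono) auto
    finally show ?thesis .
  qed
  then show ?thesis
    using \<open>B > 0\<close> by (intro exI[of _ "B / fact n"]) auto
qed

lemma smooth_fun_flat_taylor_bounds:
  assumes f: "smooth_fun f" and k: "k \<ge> 1"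
    and flat: "\<forall>j. 2 \<le> j \<and> j \<le> k \<longrightarrow> (deriv ^^ j) f 0 = 0"
  shows "\<exists>M>0. \<forall>u. \<bar>u\<bar> \<le> b \<longrightarrow>
           \<bar>f u - f 0 - deriv f 0 * u\<bar> \<le> M * \<bar>u\<bar> ^ (k + 1)
         \<and> \<bar>deriv f u - deriv f 0\<bar> \<le> M * \<bar>u\<bar> ^ k"
proof -
  obtain M0 where "M0 > 0" and M0: "\<forall>u. \<bar>u\<bar> \<le> b \<longrightarrow>
      \<bar>f u - (\<Sum>j<2. (deriv ^^ j) f 0 / fact j * u ^ j)\<bar> \<le> M0 * \<bar>u\<bar> ^ (k + 1)"
    using smooth_fun_taylor_remainder_bound[OF f, of 2 "k + 1" b] flat k by auto
  have flat': "(deriv ^^ j) (deriv f) 0 = 0" if "1 \<le> j" "j < k" for j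
    using flat[rule_format, of "Suc j"] that by (simp add: funpow_Suc_right del: funpow.simps)
  obtain M1 where "M1 > 0" and M1: "\<forall>u. \<bar>u\<bar> \<le> b \<longrightarrow>
      \<bar>deriv f u - (\<Sum>j<1. (deriv ^^ j) (deriv f) 0 / fact j * u ^ j)\<bar> \<le> M1 * \<bar>u\<bar> ^ k"
    using smooth_fun_taylor_remainder_bound[OF smooth_fun_deriv[OF f], of 1 k b] flat' k by auto
  have "\<bar>f u - f 0 - deriv f 0 * u\<bar> \<le> max M0 M1 * \<bar>u\<bar> ^ (k + 1)
      \<and> \<bar>deriv f u - deriv f 0\<bar> \<le> max M0 M1 * \<bar>u\<bar> ^ k" if "\<bar>u\<bar> \<le> b" for u
    using M0[rule_format, OF that] M1[rule_format, OF that]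
      mult_right_mono[OF max.cobounded1[of M0 M1], of "\<bar>u\<bar> ^ (k + 1)"]
      mult_right_mono[OF max.cobounded2[of M1 M0], of "\<bar>u\<bar> ^ k"]
    by (simp add: numeral_2_eq_2 max.commute algebra_simps)
  then show ?thesis
    using \<open>M0 > 0\<close> by (intro exI[of _ "max M0 M1"]) auto
qed

lemma antimono_ge_tendsto_at_top:
  fixes U :: "'a::linorder \<Rightarrow> 'b::linorder_topology"
  assumes "antimono U" "(U \<longlongrightarrow> a) at_top"
  shows "a \<le> U x"
proof (rule tendsto_upperbound[OF assms(2)])
  show "eventually (\<lambda>y. U y \<le> U x) at_top"
    using assms(1) unfolding antimono_def eventually_at_top_linorder by blast
qed simp

lemma antimono_le_tendsto_at_bot:
  fixes U :: "'a::linorder \<Rightarrow> 'b::linorder_topology"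
  assumes "antimono U" "(U \<longlongrightarrow> a) at_bot"
  shows "U x \<le> a"
proof (rule tendsto_lowerbound[OF assms(2)])
  show "eventually (\<lambda>y. U x \<le> U y) at_bot"
    using assms(1) unfolding antimono_def eventually_at_bot_linorder by blast
qed simp

lemma antimono_has_real_derivative_nonpos:
  assumes "antimono U" "(U has_real_derivative D) (at x)"
  shows "D \<le> 0"
proof -
  have "mono_on UNIV (\<lambda>x. - U x)"
    using assms(1) by (auto simp: antimono_def mono_on_def)
  from mono_on_imp_deriv_nonneg[OF this DERIV_minus[OF assms(2)]] show ?thesis
    by simp
qed

lemma has_real_derivative_tendsto_at_top_zero:
  fixes V P :: "real \<Rightarrow> real"
  assumes V: "(V \<longlongrightarrow> a) at_top"
    and V': "\<And>x. (V has_real_derivative P x) (at x)"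
    and P: "(P \<longlongrightarrow> L) at_top"
  shows "L = 0"
proof -
  have "\<exists>z. x < z \<and> V (x + 1) - V x = P z" for x
    using MVT2[of x "x + 1" V P] V' by force
  then obtain z where z: "\<And>x. x < z x" "\<And>x. V (x + 1) - V x = P (z x)"
    by metis
  have "filterlim z at_top at_top"
    using z(1) less_imp_le
    by (intro filterlim_at_top_mono[OF filterlim_ident]) (auto intro: always_eventually)
  with P have "((\<lambda>x. P (z x)) \<longlongrightarrow> L) at_top"
    by (rule filterlim_compose)
  moreover have "((\<lambda>x. V (x + 1) - V x) \<longlongrightarrow> a - a) at_top"
    using filterlim_compose[OF V filterlim_tendsto_add_at_top[OF tendsto_const filterlim_ident]] V
    by (intro tendsto_diff) (simp_all add: add.commute[of _ 1])
  ultimately show ?thesis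
    using z(2) tendsto_unique[OF trivial_limit_at_top_linorder] by simp
qed

lemma first_integral_vanishing_at_top:
  fixes f U W :: "real \<Rightarrow> real"
  assumes "\<mu> \<noteq> 0"
    and f: "\<And>u. f differentiable (at u)"
    and U: "\<And>x. U differentiable (at x)"
    and W: "\<And>x. W differentiable (at x)" "\<And>x. deriv W differentiable (at x)"
    and ode: "\<And>x. - s * deriv U x + deriv (\<lambda>y. f (U y)) x = \<mu> * deriv (deriv W) x"
    and U_lim: "(U \<longlongrightarrow> 0) at_top"
    and W_lim: "(W \<longlongrightarrow> 0) at_top"
  shows "\<mu> * deriv W x = f (U x) - f 0 - s * U x"
proof -
  define g where "g y = \<mu> * deriv W y + s * U y - f (U y)" for y
  have "(g has_real_derivative 0) (at y)" for y
  proof -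
    have fU: "((\<lambda>y. f (U y)) has_real_derivative deriv f (U y) * deriv U y) (at y)"
      using DERIV_chain2 f U DERIV_deriv_iff_real_differentiable by blast
    have "(g has_real_derivative
        \<mu> * deriv (deriv W) y + s * deriv U y - deriv f (U y) * deriv U y) (at y)"
      unfolding g_def[abs_def] using W(2) U fU
      by (intro DERIV_diff DERIV_add DERIV_cmult) (auto simp: DERIV_deriv_iff_real_differentiable)
    moreover have "\<mu> * deriv (deriv W) y + s * deriv U y - deriv f (U y) * deriv U y = 0"
      using ode[of y] DERIV_imp_deriv[OF fU] by simp
    ultimately show ?thesis
      by simp
  qed
  then have g_const: "g y = g x" for y
    using DERIV_isconst_all by blast
  have "deriv W = (\<lambda>y. (g x - s * U y + f (U y)) / \<mu>)"
    using g_const \<open>\<mu> \<noteq> 0\<close> unfolding g_def by (auto simp: field_simps)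
  moreover have "((\<lambda>y. (g x - s * U y + f (U y)) / \<mu>) \<longlongrightarrow> (g x + f 0) / \<mu>) at_top"
    using U_lim isCont_tendsto_compose[OF differentiable_imp_continuous_within[OF f] U_lim]
      \<open>\<mu> \<noteq> 0\<close>
    by (auto intro!: tendsto_eq_intros)
  ultimately have "(g x + f 0) / \<mu> = 0"
    using has_real_derivative_tendsto_at_top_zero[OF W_lim] W(1)
    by (metis DERIV_deriv_iff_real_differentiable)
  then show ?thesis
    using \<open>\<mu> \<noteq> 0\<close> unfolding g_def by (simp add: field_simps)
qed

lemma deriv_eq_of_deriv_powr_eq:
  fixes U :: "real \<Rightarrow> real"
  assumes "m \<noteq> 0" "\<mu> \<noteq> 0" and pos: "U x > 0" and U: "U differentiable (at x)"
    and eq: "\<mu> * deriv (\<lambda>y. U y powr m) x = c"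
  shows "deriv U x = U x powr (1 - m) * c / (\<mu> * m)"
proof -
  have "(U has_real_derivative deriv U x) (at x)"
    using U by (simp add: DERIV_deriv_iff_real_differentiable)
  from DERIV_fun_powr[OF this pos]
  have "((\<lambda>y. U y powr m) has_real_derivative m * U x powr (m - 1) * deriv U x) (at x)"
    by simp
  then have "c = \<mu> * m * U x powr (m - 1) * deriv U x"
    using eq DERIV_imp_deriv by fastforce
  moreover have "U x powr (1 - m) * U x powr (m - 1) = 1"
    using pos by (simp add: powr_add[symmetric])
  ultimately show ?thesis
    using assms(1,2) by (simp add: field_simps)
qed

lemma deriv2_of_autonomous_ode:
  fixes U \<phi> :: "real \<Rightarrow> real"
  assumes "open S" "x \<in> S"
    and ode: "\<And>y. y \<in> S \<Longrightarrow> deriv U y = \<phi> (U y)"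
    and \<phi>: "(\<phi> has_real_derivative \<phi>') (at (U x))"
    and U: "U differentiable (at x)"
  shows "deriv (deriv U) x = \<phi>' * deriv U x"
proof -
  have "(U has_real_derivative deriv U x) (at x)"
    using U by (simp add: DERIV_deriv_iff_real_differentiable)
  from DERIV_chain2[OF \<phi> this]
  have "((\<lambda>y. \<phi> (U y)) has_real_derivative \<phi>' * deriv U x) (at x)" .
  then have "(deriv U has_real_derivative \<phi>' * deriv U x) (at x)"
    by (rule has_field_derivative_transform_within_open[OF _ assms(1,2)]) (simp add: ode)
  then show ?thesis
    by (rule DERIV_imp_deriv)
qed

lemma powr_weighted_bounds:
  fixes u a M h h' :: real and k :: nat
  assumes "u > 0" "0 \<le> a" "a \<le> 1"
    and h: "\<bar>h\<bar> \<le> M * u ^ (k + 1)" and h': "\<bar>h'\<bar> \<le> M * u ^ k"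
  shows "\<bar>u powr a * h\<bar> \<le> M * u powr (real k + 1 + a)"
    and "\<bar>a * u powr (a - 1) * h + u powr a * h'\<bar> \<le> 2 * M * u powr (real k + a)"
proof -
  have pow: "u ^ j = u powr real j" for j
    using \<open>u > 0\<close> by (simp add: powr_realpow)
  have "\<bar>u powr a * h\<bar> \<le> u powr a * (M * u powr (real k + 1))"
    using h pow[of "k + 1"] by (simp add: abs_mult mult_left_mono add.commute)
  also have "\<dots> = M * u powr (real k + 1 + a)"
    by (simp add: powr_add)
  finally show "\<bar>u powr a * h\<bar> \<le> M * u powr (real k + 1 + a)" .
  have "\<bar>a * u powr (a - 1) * h\<bar> = a * (u powr (a - 1) * \<bar>h\<bar>)"
    using \<open>0 \<le> a\<close> by (simp add: abs_mult)
  also have "\<dots> \<le> 1 * (u powr (a - 1) * \<bar>h\<bar>)"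
    using \<open>a \<le> 1\<close> by (intro mult_right_mono) auto
  also have "\<dots> \<le> 1 * u powr (a - 1) * (M * u powr (real k + 1))"
    using h pow[of "k + 1"] by (simp add: mult_left_mono add.commute)
  finally have "\<bar>a * u powr (a - 1) * h\<bar> \<le> 1 * u powr (a - 1) * (M * u powr (real k + 1))" .
  moreover have "\<bar>u powr a * h'\<bar> \<le> u powr a * (M * u powr real k)"
    using h' pow[of k] by (simp add: abs_mult mult_left_mono)
  ultimately have "\<bar>a * u powr (a - 1) * h + u powr a * h'\<bar>
      \<le> 1 * u powr (a - 1) * (M * u powr (real k + 1)) + u powr a * (M * u powr real k)"
    by (intro order.trans[OF abs_triangle_ineq] add_mono)
  also have "\<dots> = 2 * M * u powr (real k + a)"
    by (simp add: powr_add[symmetric] algebra_simps)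
  finally show "\<bar>a * u powr (a - 1) * h + u powr a * h'\<bar> \<le> 2 * M * u powr (real k + a)" .
qed

lemma powr_diffusion_profile_bounds_pos:
  fixes U h h' :: "real \<Rightarrow> real"
  assumes m: "0 < m" "m < 1" and "\<mu> > 0"
    and U: "\<And>y. U differentiable (at y)"
    and ode: "\<And>y. \<mu> * deriv (\<lambda>z. U z powr m) y = h (U y)"
    and h': "\<And>u. (h has_real_derivative h' u) (at u)"
    and bounds: "\<And>u. 0 < u \<Longrightarrow> u \<le> b \<Longrightarrow> \<bar>h u\<bar> \<le> M * u ^ (k + 1) \<and> \<bar>h' u\<bar> \<le> M * u ^ k"
    and x: "0 < U x" "U x \<le> b"
  shows "\<bar>deriv U x\<bar> \<le> M / (\<mu> * m) * U x powr (real k + 2 - m)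
       \<and> \<bar>deriv (deriv U) x\<bar> \<le> 2 * (M / (\<mu> * m))\<^sup>2 * U x powr (2 * real k + 3 - 2 * m)"
proof -
  define \<phi> where "\<phi> u = u powr (1 - m) * h u / (\<mu> * m)" for u
  define \<phi>' where "\<phi>' u = ((1 - m) * u powr (1 - m - 1) * h u + u powr (1 - m) * h' u) / (\<mu> * m)"
    for u
  define S where "S = {y. 0 < U y}"
  have U': "deriv U y = \<phi> (U y)" if "y \<in> S" for y
    using deriv_eq_of_deriv_powr_eq[OF _ _ _ U ode] that m \<open>\<mu> > 0\<close>
    unfolding S_def \<phi>_def by auto
  have "open S"
    unfolding S_def using U
    by (intro open_Collect_less continuous_on_const)
      (simp add: continuous_at_imp_continuous_on differentiable_imp_continuous_within)
  moreover have "(\<phi> has_real_derivative \<phi>' (U x)) (at (U x))"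
    unfolding \<phi>_def[abs_def] \<phi>'_def using x(1) h' m \<open>\<mu> > 0\<close>
    by (auto intro!: derivative_eq_intros simp: field_simps)
  ultimately have U'': "deriv (deriv U) x = \<phi>' (U x) * deriv U x"
    using deriv2_of_autonomous_ode[OF _ _ U' _ U] x(1) unfolding S_def by blast
  have "\<bar>U x powr (1 - m) * h (U x)\<bar> \<le> M * U x powr (real k + 1 + (1 - m))"
    and "\<bar>(1 - m) * U x powr (1 - m - 1) * h (U x) + U x powr (1 - m) * h' (U x)\<bar>
      \<le> 2 * M * U x powr (real k + (1 - m))"
    using powr_weighted_bounds[of "U x" "1 - m"] bounds[OF x] x(1) m by auto
  then have U'_bound: "\<bar>deriv U x\<bar> \<le> M / (\<mu> * m) * U x powr (real k + 2 - m)"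
    and \<phi>'_bound: "\<bar>\<phi>' (U x)\<bar> \<le> 2 * (M / (\<mu> * m)) * U x powr (real k + 1 - m)"
    using U' x(1) m \<open>\<mu> > 0\<close> unfolding S_def \<phi>_def \<phi>'_def
    by (simp_all add: abs_mult divide_right_mono algebra_simps)
  have "\<bar>deriv (deriv U) x\<bar> = \<bar>\<phi>' (U x)\<bar> * \<bar>deriv U x\<bar>"
    by (simp add: U'' abs_mult)
  also have "\<dots> \<le> 2 * (M / (\<mu> * m)) * U x powr (real k + 1 - m)
      * (M / (\<mu> * m) * U x powr (real k + 2 - m))"
    using \<phi>'_bound U'_bound by (intro mult_mono) auto
  also have "\<dots> = 2 * (M / (\<mu> * m))\<^sup>2 * U x powr (2 * real k + 3 - 2 * m)"
    by (simp add: power2_eq_square powr_add[symmetric] algebra_simps)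
  finally show ?thesis
    using U'_bound by simp
qed

lemma nonneg_zero_imp_deriv_deriv2_zero:
  fixes U :: "real \<Rightarrow> real"
  assumes nonneg: "\<And>y. 0 \<le> U y" and nonpos: "\<And>y. deriv U y \<le> 0"
    and U: "U differentiable (at x)" and U': "deriv U differentiable (at x)"
    and "U x = 0"
  shows "deriv U x = 0 \<and> deriv (deriv U) x = 0"
proof
  have "(U has_real_derivative deriv U x) (at x)"
    using U by (simp add: DERIV_deriv_iff_real_differentiable)
  from DERIV_local_min[OF this zero_less_one] show "deriv U x = 0"
    using nonneg \<open>U x = 0\<close> by simp
  moreover have "(deriv U has_real_derivative deriv (deriv U) x) (at x)"
    using U' by (simp add: DERIV_deriv_iff_real_differentiable)
  ultimately show "deriv (deriv U) x = 0"
    using DERIV_local_max[OF _ zero_less_one] nonpos by simp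
qed

lemma powr_diffusion_profile_bounds:
  fixes U h h' :: "real \<Rightarrow> real"
  assumes m: "0 < m" "m < 1" and "\<mu> > 0"
    and U: "\<And>y. U differentiable (at y)" and U': "\<And>y. deriv U differentiable (at y)"
    and range: "\<And>y. 0 \<le> U y" "\<And>y. U y \<le> b"
    and nonpos: "\<And>y. deriv U y \<le> 0"
    and ode: "\<And>y. \<mu> * deriv (\<lambda>z. U z powr m) y = h (U y)"
    and h': "\<And>u. (h has_real_derivative h' u) (at u)"
    and bounds: "\<And>u. 0 < u \<Longrightarrow> u \<le> b \<Longrightarrow> \<bar>h u\<bar> \<le> M * u ^ (k + 1) \<and> \<bar>h' u\<bar> \<le> M * u ^ k"
  shows "\<exists>C>0. \<forall>x. \<bar>deriv U x\<bar> \<le> C * U x powr (real k + 2 - m)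
           \<and> \<bar>deriv (deriv U) x\<bar> \<le> C * U x powr (2 * real k + 3 - 2 * m)"
proof -
  define C where "C = max 1 (max (M / (\<mu> * m)) (2 * (M / (\<mu> * m))\<^sup>2))"
  have "\<bar>deriv U x\<bar> \<le> C * U x powr (real k + 2 - m)
      \<and> \<bar>deriv (deriv U) x\<bar> \<le> C * U x powr (2 * real k + 3 - 2 * m)" for x
  proof (cases "U x = 0")
    case True
    with nonneg_zero_imp_deriv_deriv2_zero[OF range(1) nonpos U U'] show ?thesis
      by simp
  next
    case False
    then have "0 < U x"
      using range(1)[of x] by simp
    then have "\<bar>deriv U x\<bar> \<le> M / (\<mu> * m) * U x powr (real k + 2 - m)
        \<and> \<bar>deriv (deriv U) x\<bar> \<le> 2 * (M / (\<mu> * m))\<^sup>2 * U x powr (2 * real k + 3 - 2 * m)"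
      using powr_diffusion_profile_bounds_pos[OF m \<open>\<mu> > 0\<close> U ode h' bounds] range(2) by blast
    moreover have "M / (\<mu> * m) \<le> C" "2 * (M / (\<mu> * m))\<^sup>2 \<le> C"
      unfolding C_def by auto
    ultimately show ?thesis
      using mult_right_mono[OF _ powr_ge_zero] by (meson order_trans)
  qed
  moreover have "C > 0"
    unfolding C_def by (simp add: less_max_iff_disj)
  ultimately show ?thesis
    by blast
qed

theorem lemma6p1:
  fixes f U :: "real \<Rightarrow> real"
    and m \<mu> um up s :: real
    and k :: nat
  assumes m: "0 < m" "m < 1"
    and mu: "\<mu> > 0"
    and f_smooth: "smooth_fun f"
    and states: "um > up" "up = 0"
    and s_def: "s = (f up - f um) / (up - um)"
    and lax: "deriv f up = s" "s < deriv f um"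
    and k: "k \<ge> 1"
    and degen: "\<forall>j. 2 \<le> j \<and> j \<le> k \<longrightarrow> (deriv ^^ j) f up = 0"
    and nondegen: "(deriv ^^ (k + 1)) f up \<noteq> 0"
    and U_reg: "\<forall>\<xi>. U differentiable (at \<xi>)" "\<forall>\<xi>. (deriv U) differentiable (at \<xi>)"
    and Um_reg: "\<forall>\<xi>. (\<lambda>x. U x powr m) differentiable (at \<xi>)"
                "\<forall>\<xi>. deriv (\<lambda>x. U x powr m) differentiable (at \<xi>)"
    and U_mono: "antimono U"
    and U_ode: "\<forall>\<xi>. - s * deriv U \<xi> + deriv (\<lambda>x. f (U x)) \<xi>
                     = \<mu> * deriv (deriv (\<lambda>x. U x powr m)) \<xi>"
    and U_minus: "(U \<longlongrightarrow> um) at_bot"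
    and U_plus: "(U \<longlongrightarrow> up) at_top"
  shows "\<exists>C>0. \<forall>\<xi>. \<bar>deriv U \<xi>\<bar> \<le> C * U \<xi> powr (real k + 2 - m)
                   \<and> \<bar>deriv (deriv U) \<xi>\<bar> \<le> C * U \<xi> powr (2 * real k + 3 - 2 * m)"
proof -
  have U: "\<And>x. U differentiable (at x)"
    using U_reg(1) by blast
  have f: "\<And>u. f differentiable (at u)"
    using f_smooth unfolding smooth_fun_def by (metis funpow_0)
  obtain M where taylor: "\<forall>u. \<bar>u\<bar> \<le> um \<longrightarrow>
      \<bar>f u - f 0 - s * u\<bar> \<le> M * \<bar>u\<bar> ^ (k + 1) \<and> \<bar>deriv f u - s\<bar> \<le> M * \<bar>u\<bar> ^ k"
    using smooth_fun_flat_taylor_bounds[OF f_smooth k, of um] degen lax(1) states(2) by auto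
  have U_range: "0 \<le> U x" "U x \<le> um" for x
    using antimono_ge_tendsto_at_top[OF U_mono U_plus] antimono_le_tendsto_at_bot[OF U_mono U_minus]
      states(2) by auto
  have first_integral: "\<mu> * deriv (\<lambda>y. U y powr m) x = f (U x) - f 0 - s * U x" for x
  proof (rule first_integral_vanishing_at_top)
    show "((\<lambda>y. U y powr m) \<longlongrightarrow> 0) at_top"
      using U_plus states(2) U_range(1) m(1) by (intro tendsto_zero_powrI) auto
  qed (use mu U_ode U_plus states(2) U Um_reg f in auto)
  have U'_nonpos: "deriv U x \<le> 0" for x
    using antimono_has_real_derivative_nonpos[OF U_mono] U
    by (metis DERIV_deriv_iff_real_differentiable)
  show ?thesis
  proof (rule powr_diffusion_profile_bounds[OF m mu U _ U_range U'_nonpos first_integral])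
    show "((\<lambda>u. f u - f 0 - s * u) has_real_derivative deriv f u - s) (at u)" for u
      using f by (auto intro!: derivative_eq_intros simp: DERIV_deriv_iff_real_differentiable)
    show "\<bar>f u - f 0 - s * u\<bar> \<le> M * u ^ (k + 1) \<and> \<bar>deriv f u - s\<bar> \<le> M * u ^ k"
      if "0 < u" "u \<le> um" for u
      using taylor[rule_format, of u] that by simp
  qed (use U_reg(2) in auto)
qed

end
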